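(* If $P_2$ is strictly increasing on $[0,1]$, then there exists at most one sequence $T=(T_k)\in\mathcal{T}$ satisfying $$\exp\left(\int_0^x\log\bigl(1-P_1(T_k(\alpha))\bigr)\,d\alpha\right)+\prod_{i=1}^k\bigl(1-P_2(T_i(x))\bigr)=1\qquad\text{for all }x\ge0,\ k\in\mathbb{N}.$$
   Context: $P_1,P_2:[0,1]\to[0,1]$ are continuously differentiable, increasing, $P_j(0)=0$, $P_j(1)=1$, $P_j(t)<1$ for $t<1$. The class $\mathcal{T}$: all sequences $T=(T_1,T_2,\dots)$ of functions on $[0,\infty)$ such that each $T_k$ is continuous on $[0,\infty)$ and continuously differentiable on $(0,\infty)$; $0<T_k(x)\le1$; $T_k'(x)<0$ and $T_{k+1}(x)<T_k(x)$ for $x>0$; $T_k(0)=1$. *)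

theory Defs
  imports "HOL-Analysis.Analysis"
begin

text \<open>Standing assumptions on P_1, P_2 (only their values on [0,1] matter).\<close>
definition admissible_P :: "(real \<Rightarrow> real) \<Rightarrow> bool" where
  "admissible_P P \<longleftrightarrow>
     P C1_differentiable_on {0..1} \<and> mono_on {0..1} P \<and>
     P 0 = 0 \<and> P 1 = 1 \<and> (\<forall>t\<in>{0..<1}. P t < 1)"

text \<open>The class T. Sequences are indexed from 0: T k here is T_(k+1) of the paper.
  Only the values on [0,infinity) matter.\<close>
definition in_class_T :: "(nat \<Rightarrow> real \<Rightarrow> real) \<Rightarrow> bool" where
  "in_class_T T \<longleftrightarrow> (\<forall>k.
     continuous_on {0..} (T k) \<and>
     T k C1_differentiable_on {0<..} \<and>
     (\<forall>x\<ge>0. 0 < T k x \<and> T k x \<le> 1) \<and>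
     (\<forall>x>0. deriv (T k) x < 0) \<and>
     (\<forall>x>0. T (Suc k) x < T k x) \<and>
     T k 0 = 1)"

text \<open>exp (integral_0^x log (g a) da) for 0 < g \<le> 1 on (0,x]: the integrand is
  nonpositive, so the (possibly improper) integral is taken as a Lebesgue integral of
  a function of fixed sign; if it diverges to -infinity the exponential is 0.\<close>
definition exp_int_log :: "(real \<Rightarrow> real) \<Rightarrow> real \<Rightarrow> real" where
  "exp_int_log g x =
     (let I = (\<integral>\<^sup>+ a. ennreal (- ln (g a)) * indicator {0..x} a \<partial>lborel)
      in if I = \<infinity> then 0 else exp (- enn2real I))"

definition solves_system :: "(real \<Rightarrow> real) \<Rightarrow> (real \<Rightarrow> real) \<Rightarrow> (nat \<Rightarrow> real \<Rightarrow> real) \<Rightarrow> bool" where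
  "solves_system P1 P2 T \<longleftrightarrow> (\<forall>k. \<forall>x\<ge>0.
     exp_int_log (\<lambda>a. 1 - P1 (T k a)) x + (\<Prod>i\<le>k. 1 - P2 (T i x)) = 1)"

end

theory Submission
  imports Defs
begin

(*
  Write H_U(x) = \<integral>_0^x -ln(1 - P1(U_k(a))) da and c(x) = \<Prod>_{i<k} (1 - P2(U_i(x))), so
  that level k of the system reads  exp(-H_U(x)) = 1 - c(x) (1 - P2(U_k(x))).
  Suppose two solutions U, V in the class agree below level k, so that they share c.
  Wherever H_U(a) > H_V(a), the equation forces P2(U_k a) < P2(V_k a), hence
  U_k a < V_k a and so the integrand of H_U is at most that of H_V at a.  A
  continuation argument (the last point where H_U - H_V \<le> 0 cannot be followed by an
  interval on which H_U - H_V > 0) then yields H_U \<le> H_V everywhere; by symmetry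
  H_U = H_V.  Cancelling the positive factor c and using strict monotonicity of P2
  gives U_k = V_k.
*)

lemma admissible_P_facts:
  assumes "admissible_P P"
  shows "continuous_on {0..1} P"
    and "\<And>t. t \<in> {0..1} \<Longrightarrow> 0 \<le> P t"
    and "\<And>t. t \<in> {0..1} \<Longrightarrow> P t \<le> 1"
    and "\<And>t. 0 \<le> t \<Longrightarrow> t < 1 \<Longrightarrow> P t < 1"
    and "\<And>s t. s \<in> {0..1} \<Longrightarrow> t \<in> {0..1} \<Longrightarrow> s \<le> t \<Longrightarrow> P s \<le> P t"
    and "P 0 = 0"
proof -
  have c1: "P C1_differentiable_on {0..1}" and m: "mono_on {0..1} P" and p0: "P 0 = 0"
    and p1: "P 1 = 1" and lt: "\<forall>t\<in>{0..<1}. P t < 1"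
    using assms unfolding admissible_P_def by auto
  show "continuous_on {0..1} P"
    using c1 unfolding C1_differentiable_on_eq
    by (meson continuous_at_imp_continuous_on differentiable_imp_continuous_within)
  show mono: "\<And>s t. s \<in> {0..1} \<Longrightarrow> t \<in> {0..1} \<Longrightarrow> s \<le> t \<Longrightarrow> P s \<le> P t"
    using m by (simp add: mono_on_def)
  show "\<And>t. t \<in> {0..1} \<Longrightarrow> 0 \<le> P t" using mono[of 0] p0 by auto
  show "\<And>t. t \<in> {0..1} \<Longrightarrow> P t \<le> 1" using mono[of _ 1] p1 by auto
  show "\<And>t. 0 \<le> t \<Longrightarrow> t < 1 \<Longrightarrow> P t < 1" using lt by auto
  show "P 0 = 0" by fact
qed

lemma in_class_T_facts:
  assumes "in_class_T U"
  shows "\<And>x. 0 \<le> x \<Longrightarrow> 0 < U k x" and "\<And>x. 0 \<le> x \<Longrightarrow> U k x \<le> 1"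
    and "continuous_on {0..} (U k)" and "U k 0 = 1"
    and "\<And>x. 0 < x \<Longrightarrow> U k x < 1"
proof -
  have c: "continuous_on {0..} (U k)" and d: "U k C1_differentiable_on {0<..}"
    and b: "\<forall>x\<ge>0. 0 < U k x \<and> U k x \<le> 1" and dr: "\<forall>x>0. deriv (U k) x < 0"
    and at0: "U k 0 = 1"
    using assms unfolding in_class_T_def by auto
  show "\<And>x. 0 \<le> x \<Longrightarrow> 0 < U k x" "\<And>x. 0 \<le> x \<Longrightarrow> U k x \<le> 1" using b by auto
  show "continuous_on {0..} (U k)" "U k 0 = 1" by fact+
  fix x :: real assume x: "0 < x"
  have "continuous_on {0..x} (U k)" using c by (rule continuous_on_subset) auto
  moreover have "\<And>z. 0 < z \<Longrightarrow> z < x \<Longrightarrow> U k differentiable (at z)"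
    using d unfolding C1_differentiable_on_eq by auto
  ultimately obtain l z where z: "0 < z" "z < x" and l: "DERIV (U k) z :> l"
    and mvt: "U k x - U k 0 = (x - 0) * l"
    using MVT[OF x] by blast
  have "l < 0" using dr z DERIV_imp_deriv[OF l] by auto
  with mvt x at0 show "U k x < 1" using mult_pos_neg[of x l] by simp
qed

lemma admissible_comp_class:
  assumes P: "admissible_P P" and U: "in_class_T U"
  shows "\<And>x. 0 \<le> x \<Longrightarrow> 0 \<le> 1 - P (U k x)"
    and "\<And>x. 0 \<le> x \<Longrightarrow> 1 - P (U k x) \<le> 1"
    and "\<And>x. 0 < x \<Longrightarrow> 0 < 1 - P (U k x)"
    and "continuous_on {0..} (\<lambda>x. P (U k x))"
proof -
  have range: "U k x \<in> {0..1}" if "0 \<le> x" for x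
    using in_class_T_facts(1,2)[OF U that, of k] by simp
  show "\<And>x. 0 \<le> x \<Longrightarrow> 0 \<le> 1 - P (U k x)" "\<And>x. 0 \<le> x \<Longrightarrow> 1 - P (U k x) \<le> 1"
    using admissible_P_facts(2,3)[OF P] range by auto
  show "0 < 1 - P (U k x)" if "0 < x" for x
  proof -
    have "0 \<le> U k x" "U k x < 1" using in_class_T_facts(1,5)[OF U, of x k] that by auto
    then show ?thesis using admissible_P_facts(4)[OF P] by simp
  qed
  have "U k ` {0..} \<subseteq> {0..1}" by (rule image_subsetI, rule range) simp
  then show "continuous_on {0..} (\<lambda>x. P (U k x))"
    by (rule continuous_on_compose2[OF admissible_P_facts(1)[OF P] in_class_T_facts(3)[OF U]])
qed

lemma continuous_on_neg_log_integrand: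
  assumes P: "admissible_P P" and U: "in_class_T U"
  shows "continuous_on {0<..} (\<lambda>t. - ln (1 - P (U k t)))"
proof -
  have "continuous_on {0<..} (\<lambda>t. P (U k t))"
    using admissible_comp_class(4)[OF P U] by (rule continuous_on_subset) auto
  then have "continuous_on {0<..} (\<lambda>t. 1 - P (U k t))"
    by (intro continuous_on_diff continuous_on_const)
  moreover have "\<forall>t\<in>{0<..}. 1 - P (U k t) \<noteq> 0"
    using admissible_comp_class(3)[OF P U, where k=k] by (simp add: less_imp_neq[symmetric])
  ultimately show ?thesis by (intro continuous_on_minus continuous_on_ln)
qed

definition cum_integral :: "(real \<Rightarrow> real) \<Rightarrow> real \<Rightarrow> ennreal" where
  "cum_integral h x = (\<integral>\<^sup>+ t. ennreal (h t) * indicator {0..x} t \<partial>lborel)"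

lemma exp_int_log_eq:
  "exp_int_log g x =
     (if cum_integral (\<lambda>a. - ln (g a)) x = \<infinity> then 0
      else exp (- enn2real (cum_integral (\<lambda>a. - ln (g a)) x)))"
  by (simp add: exp_int_log_def cum_integral_def Let_def)

text \<open>The endpoint 0 is a null set, so only the behaviour of h on (0,x] matters.\<close>

lemma cum_integral_open:
  "cum_integral h x = (\<integral>\<^sup>+ t. ennreal (h t) * indicator {0<..x} t \<partial>lborel)"
  unfolding cum_integral_def
  by (rule nn_integral_cong_AE) (use AE_lborel_singleton[of 0] in \<open>auto simp: indicator_def\<close>)

lemma cum_integral_0: "cum_integral h 0 = 0"
  by (simp add: cum_integral_open)

lemma borel_measurable_indicator_interval:
  fixes h :: "real \<Rightarrow> real"
  assumes "continuous_on {0<..} h" and "0 \<le> a"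
  shows "(\<lambda>t. ennreal (h t) * indicator {a<..b} t) \<in> borel_measurable lborel"
proof -
  have "continuous_on {a<..b} h"
    using assms(1) by (rule continuous_on_subset) (use assms(2) in auto)
  then have "(\<lambda>t. indicator {a<..b} t *\<^sub>R h t) \<in> borel_measurable borel"
    by (intro borel_measurable_continuous_on_indicator) auto
  then have "(\<lambda>t. ennreal (indicator {a<..b} t *\<^sub>R h t)) \<in> borel_measurable borel"
    by measurable
  also have "(\<lambda>t. ennreal (indicator {a<..b} t *\<^sub>R h t)) =
      (\<lambda>t. ennreal (h t) * indicator {a<..b} t)"
    by (auto simp: indicator_def)
  finally show ?thesis by simp
qed

lemma cum_integral_split:
  assumes h: "continuous_on {0<..} h" and x: "0 \<le> x0" "x0 \<le> x1"
  shows "cum_integral h x1 =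
     cum_integral h x0 + (\<integral>\<^sup>+ t. ennreal (h t) * indicator {x0<..x1} t \<partial>lborel)"
proof -
  have "(\<lambda>t. ennreal (h t) * indicator {0<..x1} t) =
      (\<lambda>t. ennreal (h t) * indicator {0<..x0} t + ennreal (h t) * indicator {x0<..x1} t)"
    using x by (auto simp: indicator_def)
  then show ?thesis
    unfolding cum_integral_open
    by (simp only:) (intro nn_integral_add borel_measurable_indicator_interval[OF h]; use x in simp)
qed

text \<open>The proof looks at the
  last zero-or-below point of D in [0,x].\<close>

lemma nonpos_by_continuation:
  fixes D :: "real \<Rightarrow> real"
  assumes cont: "continuous_on {0..} D" and D0: "D 0 \<le> 0"
    and step: "\<And>x0 x1. 0 \<le> x0 \<Longrightarrow> x0 < x1 \<Longrightarrow> D x0 \<le> 0 \<Longrightarrow>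
       (\<forall>a\<in>{x0<..x1}. D a > 0) \<Longrightarrow> D x1 \<le> 0"
    and x: "0 \<le> x"
  shows "D x \<le> 0"
proof (rule ccontr)
  assume neg: "\<not> D x \<le> 0"
  define A where "A = {0..x} \<inter> D -` {..0}"
  have "continuous_on {0..x} D" using cont by (rule continuous_on_subset) auto
  then have closed: "closed A" unfolding A_def by (rule continuous_closed_preimage) auto
  have "0 \<in> A" using D0 x by (auto simp: A_def)
  have bdd: "bdd_above A" by (auto simp: A_def bdd_above_def)
  define s where "s = Sup A"
  have "s \<in> A" unfolding s_def using closed_contains_Sup[OF _ bdd closed] \<open>0 \<in> A\<close> by auto
  then have s: "0 \<le> s" "s \<le> x" "D s \<le> 0" by (auto simp: A_def)
  with neg have "s < x" by (cases "s = x") auto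
  have "D a > 0" if a: "a \<in> {s<..x}" for a
  proof (rule ccontr)
    assume "\<not> D a > 0"
    then have "a \<in> A" using a s by (auto simp: A_def)
    then have "a \<le> s" unfolding s_def by (rule cSup_upper[OF _ bdd])
    then show False using a by auto
  qed
  then have "D x \<le> 0" using step[OF s(1) \<open>s < x\<close> s(3)] by blast
  with neg show False by simp
qed

lemma cum_integral_comparison:
  fixes f g :: "real \<Rightarrow> real"
  assumes f: "continuous_on {0<..} f" and g: "continuous_on {0<..} g"
    and fin_f: "\<And>x. 0 \<le> x \<Longrightarrow> cum_integral f x \<noteq> \<infinity>"
    and fin_g: "\<And>x. 0 \<le> x \<Longrightarrow> cum_integral g x \<noteq> \<infinity>"
    and cont: "continuous_on {0..} (\<lambda>x. enn2real (cum_integral f x) - enn2real (cum_integral g x))"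
    and local: "\<And>a. 0 < a \<Longrightarrow> enn2real (cum_integral g a) < enn2real (cum_integral f a) \<Longrightarrow> f a \<le> g a"
    and x: "0 \<le> x"
  shows "cum_integral f x \<le> cum_integral g x"
proof -
  define F where "F x = enn2real (cum_integral f x)" for x
  define G where "G x = enn2real (cum_integral g x)" for x
  have F: "cum_integral f x = ennreal (F x)" and G: "cum_integral g x = ennreal (G x)"
    if "0 \<le> x" for x
    using fin_f[OF that] fin_g[OF that] by (simp_all add: F_def G_def less_top)
  have "F x - G x \<le> 0"
  proof (rule nonpos_by_continuation[OF cont[folded F_def G_def] _ _ x])
    show "F 0 - G 0 \<le> 0" by (simp add: F_def G_def cum_integral_0)
  next
    fix x0 x1 :: real
    assume x0: "0 \<le> x0" "x0 < x1" "F x0 - G x0 \<le> 0" and pos: "\<forall>a\<in>{x0<..x1}. F a - G a > 0"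
    have "(\<integral>\<^sup>+ t. ennreal (f t) * indicator {x0<..x1} t \<partial>lborel) \<le>
          (\<integral>\<^sup>+ t. ennreal (g t) * indicator {x0<..x1} t \<partial>lborel)"
      using local pos x0 unfolding F_def G_def
      by (intro nn_integral_mono) (auto simp: indicator_def intro: ennreal_leI)
    moreover have "cum_integral f x0 \<le> cum_integral g x0"
      using x0 by (simp add: F G ennreal_leI)
    ultimately have "cum_integral f x1 \<le> cum_integral g x1"
      unfolding cum_integral_split[OF f x0(1) less_imp_le[OF x0(2)]]
        cum_integral_split[OF g x0(1) less_imp_le[OF x0(2)]]
      by (rule add_mono[rotated])
    then show "F x1 - G x1 \<le> 0"
      using fin_g[of x1] x0 unfolding F_def G_def by (simp add: enn2real_mono less_top)
  qed
  then show ?thesis using x by (simp add: F G ennreal_leI)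
qed

lemma continuous_on_from_exp_neg:
  fixes F g :: "'a::topological_space \<Rightarrow> real"
  assumes g: "continuous_on S g" and eq: "\<And>x. x \<in> S \<Longrightarrow> exp (- F x) = g x"
  shows "continuous_on S F"
proof (rule continuous_on_eq)
  have "\<forall>x\<in>S. g x \<noteq> 0" by (metis eq exp_not_eq_zero)
  then show "continuous_on S (\<lambda>x. - ln (g x))" by (intro continuous_on_minus continuous_on_ln g)
  show "- ln (g x) = F x" if "x \<in> S" for x
    by (simp flip: eq[OF that])
qed

text \<open>Level k of the system, with the product of the lower levels split off.  Since P2 is
  strictly increasing and U_k > 0, the whole product is < 1, so the integral is finite.\<close>

lemma level_equation:
  assumes P2: "admissible_P P2" and sm: "strict_mono_on {0..1} P2"
    and U: "in_class_T U" and sol: "solves_system P1 P2 U" and x: "0 \<le> x"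
  shows "cum_integral (\<lambda>t. - ln (1 - P1 (U k t))) x \<noteq> \<infinity>"
    and "exp (- enn2real (cum_integral (\<lambda>t. - ln (1 - P1 (U k t))) x)) =
           1 - (\<Prod>i<k. 1 - P2 (U i x)) * (1 - P2 (U k x))"
proof -
  let ?I = "cum_integral (\<lambda>t. - ln (1 - P1 (U k t))) x"
  let ?c = "\<Prod>i<k. 1 - P2 (U i x)"
  have prod: "(\<Prod>i\<le>k. 1 - P2 (U i x)) = ?c * (1 - P2 (U k x))"
    by (simp add: lessThan_Suc_atMost[symmetric])
  have "exp_int_log (\<lambda>a. 1 - P1 (U k a)) x + (\<Prod>i\<le>k. 1 - P2 (U i x)) = 1"
    using sol x unfolding solves_system_def by blast
  then have eq: "(if ?I = \<infinity> then 0 else exp (- enn2real ?I)) + ?c * (1 - P2 (U k x)) = 1"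
    by (simp only: exp_int_log_eq prod)
  have c: "0 \<le> ?c" "?c \<le> 1"
    using admissible_comp_class(1,2)[OF P2 U x] by (auto intro: prod_nonneg prod_le_1)
  have "P2 0 < P2 (U k x)"
    using sm in_class_T_facts(1,2)[OF U x, of k] by (auto simp: strict_mono_on_def)
  then have "1 - P2 (U k x) < 1" using admissible_P_facts(6)[OF P2] by simp
  moreover have "?c * (1 - P2 (U k x)) \<le> 1 - P2 (U k x)"
    using c admissible_comp_class(1)[OF P2 U x, of k] by (simp add: mult_left_le_one_le)
  ultimately have "?c * (1 - P2 (U k x)) < 1" by linarith
  then show fin: "?I \<noteq> \<infinity>" using eq by (auto split: if_splits)
  show "exp (- enn2real ?I) = 1 - ?c * (1 - P2 (U k x))" using eq fin by simp
qed

lemma neg_log_integrand_mono: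
  assumes P1: "admissible_P P1" and P2: "admissible_P P2"
    and u: "u \<in> {0..1}" and v: "0 \<le> v" "v < 1" and less: "P2 u < P2 v"
  shows "- ln (1 - P1 u) \<le> - ln (1 - P1 v)"
proof -
  have "u < v" using admissible_P_facts(5)[OF P2, of v u] u v less by force
  then have "P1 u \<le> P1 v" using admissible_P_facts(5)[OF P1] u v by auto
  moreover have "P1 v < 1" using admissible_P_facts(4)[OF P1] v by auto
  ultimately show ?thesis by simp
qed

lemma cum_integral_le_if_agree_below:
  assumes P1: "admissible_P P1" and P2: "admissible_P P2" and sm: "strict_mono_on {0..1} P2"
    and U: "in_class_T U" and solU: "solves_system P1 P2 U"
    and V: "in_class_T V" and solV: "solves_system P1 P2 V"
    and below: "\<And>i x. i < k \<Longrightarrow> 0 \<le> x \<Longrightarrow> U i x = V i x"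
    and x: "0 \<le> x"
  shows "cum_integral (\<lambda>t. - ln (1 - P1 (U k t))) x \<le> cum_integral (\<lambda>t. - ln (1 - P1 (V k t))) x"
proof (rule cum_integral_comparison[OF continuous_on_neg_log_integrand[OF P1 U]
      continuous_on_neg_log_integrand[OF P1 V] level_equation(1)[OF P2 sm U solU]
      level_equation(1)[OF P2 sm V solV] _ _ x])
  define c where "c x = (\<Prod>i<k. 1 - P2 (U i x))" for x
  define FU where "FU x = enn2real (cum_integral (\<lambda>t. - ln (1 - P1 (U k t))) x)" for x
  define FV where "FV x = enn2real (cum_integral (\<lambda>t. - ln (1 - P1 (V k t))) x)" for x
  have same_c: "(\<Prod>i<k. 1 - P2 (V i x)) = c x" if "0 \<le> x" for x
    unfolding c_def by (intro prod.cong refl) (simp add: below that)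
  have eqU: "exp (- FU x) = 1 - c x * (1 - P2 (U k x))" if "0 \<le> x" for x
    using level_equation(2)[OF P2 sm U solU that] unfolding FU_def c_def .
  have eqV: "exp (- FV x) = 1 - c x * (1 - P2 (V k x))" if "0 \<le> x" for x
    using level_equation(2)[OF P2 sm V solV that, of k] unfolding FV_def same_c[OF that] .
  have c: "continuous_on {0..} c" unfolding c_def
    by (intro continuous_on_prod continuous_on_diff continuous_on_const admissible_comp_class(4)[OF P2 U])
  have "continuous_on {0..} (\<lambda>x. 1 - c x * (1 - P2 (U k x)))"
    by (intro continuous_on_diff continuous_on_mult continuous_on_const c admissible_comp_class(4)[OF P2 U])
  then have "continuous_on {0..} FU" by (rule continuous_on_from_exp_neg) (simp add: eqU)
  moreover have "continuous_on {0..} (\<lambda>x. 1 - c x * (1 - P2 (V k x)))"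
    by (intro continuous_on_diff continuous_on_mult continuous_on_const c admissible_comp_class(4)[OF P2 V])
  then have "continuous_on {0..} FV" by (rule continuous_on_from_exp_neg) (simp add: eqV)
  ultimately show "continuous_on {0..} (\<lambda>x. FU x - FV x)" by (rule continuous_on_diff)
  txt \<open>Where the order is wrong, the shared factor c turns the system into
    P2(U_k a) < P2(V_k a), which orders the integrands.\<close>
  fix a :: real assume a: "0 < a" and wrong: "FV a < FU a"
  have "exp (- FU a) < exp (- FV a)" using wrong by simp
  then have "c a * (1 - P2 (V k a)) < c a * (1 - P2 (U k a))"
    using eqU[of a] eqV[of a] a by linarith
  moreover have "0 \<le> c a"
    unfolding c_def using admissible_comp_class(1)[OF P2 U] a by (simp add: prod_nonneg)
  ultimately have "1 - P2 (V k a) < 1 - P2 (U k a)" by (rule mult_left_less_imp_less)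
  then have "P2 (U k a) < P2 (V k a)" by simp
  moreover have "U k a \<in> {0..1}" "0 \<le> V k a" "V k a < 1"
    using in_class_T_facts(1,2,5)[OF U, of a k] in_class_T_facts(1,5)[OF V, of a k] a by auto
  ultimately show "- ln (1 - P1 (U k a)) \<le> - ln (1 - P1 (V k a))"
    using neg_log_integrand_mono[OF P1 P2] by blast
qed

lemma level_unique:
  assumes P1: "admissible_P P1" and P2: "admissible_P P2" and sm: "strict_mono_on {0..1} P2"
    and U: "in_class_T U" and solU: "solves_system P1 P2 U"
    and V: "in_class_T V" and solV: "solves_system P1 P2 V"
    and below: "\<And>i x. i < k \<Longrightarrow> 0 \<le> x \<Longrightarrow> U i x = V i x"
    and x: "0 < x"
  shows "U k x = V k x"
proof -
  let ?c = "\<Prod>i<k. 1 - P2 (U i x)"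
  let ?IU = "cum_integral (\<lambda>t. - ln (1 - P1 (U k t))) x"
  let ?IV = "cum_integral (\<lambda>t. - ln (1 - P1 (V k t))) x"
  have x': "0 \<le> x" using x by simp
  have below': "\<And>i x. i < k \<Longrightarrow> 0 \<le> x \<Longrightarrow> V i x = U i x" using below by metis
  have "?IU = ?IV"
    using cum_integral_le_if_agree_below[OF P1 P2 sm U solU V solV below x']
      cum_integral_le_if_agree_below[OF P1 P2 sm V solV U solU below' x']
    by (rule order.antisym)
  have same_c: "(\<Prod>i<k. 1 - P2 (V i x)) = ?c"
    by (intro prod.cong refl) (simp add: below' x')
  have "1 - ?c * (1 - P2 (U k x)) = exp (- enn2real ?IU)"
    by (rule level_equation(2)[OF P2 sm U solU x', symmetric])
  also have "\<dots> = exp (- enn2real ?IV)" using \<open>?IU = ?IV\<close> by simp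
  also have "\<dots> = 1 - ?c * (1 - P2 (V k x))"
    using level_equation(2)[OF P2 sm V solV x', of k] unfolding same_c .
  finally have "?c * (1 - P2 (U k x)) = ?c * (1 - P2 (V k x))" by simp
  moreover have "?c \<noteq> 0"
    using admissible_comp_class(3)[OF P2 U x] by (simp add: prod_pos less_imp_neq[symmetric])
  ultimately have "1 - P2 (U k x) = 1 - P2 (V k x)" using mult_left_cancel by blast
  then have "P2 (V k x) = P2 (U k x)" by simp
  moreover have "V k x \<in> {0..1}" "U k x \<in> {0..1}"
    using in_class_T_facts(1,2)[OF V x', of k] in_class_T_facts(1,2)[OF U x', of k] by auto
  ultimately show ?thesis by (rule strict_mono_on_eqD[OF sm])
qed

theorem corollary3:
  fixes P1 P2 :: "real \<Rightarrow> real" and T S :: "nat \<Rightarrow> real \<Rightarrow> real"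
  assumes "admissible_P P1" and "admissible_P P2"
    and "strict_mono_on {0..1} P2"
    and "in_class_T T" and "solves_system P1 P2 T"
    and "in_class_T S" and "solves_system P1 P2 S"
  shows "\<forall>k. \<forall>x\<ge>0. T k x = S k x"
proof (intro allI impI)
  fix k and x :: real
  assume "0 \<le> x"
  then show "T k x = S k x"
  proof (induction k arbitrary: x rule: less_induct)
    case (less k)
    show ?case
    proof (cases "x = 0")
      case True
      then show ?thesis using in_class_T_facts(4)[OF assms(4)] in_class_T_facts(4)[OF assms(6)] by simp
    next
      case False
      with less.prems show ?thesis using level_unique[OF assms less.IH] by simp
    qed
  qed
qed

end
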